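(* Let $\hat y_1,\dots,\hat y_n\in\mathbb R$ be predictions, let $y_1,\dots,y_n\in\{-1,1\}$ be labels, let $\mathcal I^+=\{i: y_i=1\}$ and $\mathcal I^-=\{i:y_i=-1\}$, and let $m\ge 0$. Let $\ell(z)=(m-z)_+^2$ be the squared hinge loss, where $(z)_+=\max(z,0)$. Define $v_i=\hat y_i+m\,I[y_i=-1]$ for $i=1,\dots,n$ (where $I[\cdot]$ is $1$ if the condition holds and $0$ otherwise), and let $s_1,\dots,s_n$ be a permutation of $\{1,\dots,n\}$ with $v_{s_1}\le\cdots\le v_{s_n}$. Set $a_0=b_0=c_0=L_0=0$ and for $i=1,\dots,n$ define recursively $$a_i=a_{i-1}+I[y_{s_i}=1],\quad b_i=b_{i-1}+I[y_{s_i}=1]\,2(m-\hat y_{s_i}),\quad c_i=c_{i-1}+I[y_{s_i}=1]\,(m-\hat y_{s_i})^2,$$ $$L_i=L_{i-1}+I[y_{s_i}=-1]\left(a_i\hat y_{s_i}^2+b_i\hat y_{s_i}+c_i\right).$$ Then $$\sum_{k\in\mathcal I^-}\sum_{j\in\mathcal I^+}\ell(\hat y_j-\hat y_k)=L_n.$$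
   Context: $m$ is a margin hyper-parameter; the left-hand side is the all-pairs squared hinge loss summed over all pairs of a positively labeled and a negatively labeled example. *)

theory Defs
  imports Complex_Main
begin

definition pos_part :: "real \<Rightarrow> real" where
  "pos_part z = max z 0"

definition sq_hinge :: "real \<Rightarrow> real \<Rightarrow> real" where
  "sq_hinge m z = (pos_part (m - z))^2"

definition ind :: "bool \<Rightarrow> real" where
  "ind P = (if P then 1 else 0)"

fun rec_a :: "(nat \<Rightarrow> real) \<Rightarrow> (nat \<Rightarrow> nat) \<Rightarrow> nat \<Rightarrow> real" where
  "rec_a y s 0 = 0"
| "rec_a y s (Suc i) = rec_a y s i + ind (y (s (Suc i)) = 1)"

fun rec_b :: "real \<Rightarrow> (nat \<Rightarrow> real) \<Rightarrow> (nat \<Rightarrow> real) \<Rightarrow> (nat \<Rightarrow> nat) \<Rightarrow> nat \<Rightarrow> real" where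
  "rec_b m yh y s 0 = 0"
| "rec_b m yh y s (Suc i) = rec_b m yh y s i
      + ind (y (s (Suc i)) = 1) * (2 * (m - yh (s (Suc i))))"

fun rec_c :: "real \<Rightarrow> (nat \<Rightarrow> real) \<Rightarrow> (nat \<Rightarrow> real) \<Rightarrow> (nat \<Rightarrow> nat) \<Rightarrow> nat \<Rightarrow> real" where
  "rec_c m yh y s 0 = 0"
| "rec_c m yh y s (Suc i) = rec_c m yh y s i
      + ind (y (s (Suc i)) = 1) * (m - yh (s (Suc i)))^2"

fun rec_L :: "real \<Rightarrow> (nat \<Rightarrow> real) \<Rightarrow> (nat \<Rightarrow> real) \<Rightarrow> (nat \<Rightarrow> nat) \<Rightarrow> nat \<Rightarrow> real" where
  "rec_L m yh y s 0 = 0"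
| "rec_L m yh y s (Suc i) = rec_L m yh y s i
      + ind (y (s (Suc i)) = -1) *
        (rec_a y s (Suc i) * (yh (s (Suc i)))^2
         + rec_b m yh y s (Suc i) * yh (s (Suc i))
         + rec_c m yh y s (Suc i))"

end

theory Submission
  imports Defs
begin

text \<open>Unrolling the recursions, a_i x^2 + b_i x + c_i is the sum of (m - yh_j + x)^2 over
the positives j among s_1, ..., s_i, so L_n sums, over each negative k = s_p, the squares
(m - yh_j + yh_k)^2 of the positives j that precede it in the sorted order. With
v_j = yh_j for a positive j and v_k = yh_k + m for a negative k, the hinge term of the pair
(j, k) is (v_k - v_j)_+^2: it is this square when j precedes k (v_j \<le> v_k) and vanishes
when j follows k (v_k \<le> v_j). Hence the prefix sums are exactly the full hinge sums, and
reindexing along the permutation s gives the all-pairs loss.\<close>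

lemma sq_hinge_eq_square: "z \<le> m \<Longrightarrow> sq_hinge m z = (m - z)^2"
  by (simp add: sq_hinge_def pos_part_def)

lemma sq_hinge_eq_0: "m \<le> z \<Longrightarrow> sq_hinge m z = 0"
  by (simp add: sq_hinge_def pos_part_def)

lemma sum_atLeastAtMost_eq_prefix:
  fixes f g :: "nat \<Rightarrow> 'a::comm_monoid_add"
  assumes "p \<le> n"
    and "\<And>q. q \<in> {1..p} \<Longrightarrow> f q = g q"
    and "\<And>q. q \<in> {p<..n} \<Longrightarrow> f q = 0"
  shows "(\<Sum>q\<in>{1..n}. f q) = (\<Sum>q\<in>{1..p}. g q)"
proof -
  have split: "{1..n} = {1..p} \<union> {p<..n}"
    using assms(1) by auto
  have "(\<Sum>q\<in>{1..n}. f q) = (\<Sum>q\<in>{1..p}. f q) + (\<Sum>q\<in>{p<..n}. f q)"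
    unfolding split by (rule sum.union_disjoint) auto
  also have "\<dots> = (\<Sum>q\<in>{1..p}. g q)"
    using assms(2,3) by simp
  finally show ?thesis .
qed

lemma rec_abc_eq_sum:
  "rec_a y s p * x^2 + rec_b m yh y s p * x + rec_c m yh y s p
   = (\<Sum>q\<in>{1..p}. ind (y (s q) = 1) * (m - yh (s q) + x)^2)"
  by (induction p) (auto simp: sum.cl_ivl_Suc algebra_simps power2_eq_square ind_def)

lemma rec_L_eq_sum:
  "rec_L m yh y s t = (\<Sum>p\<in>{1..t}. ind (y (s p) = -1) *
      (\<Sum>q\<in>{1..p}. ind (y (s q) = 1) * (m - yh (s q) + yh (s p))^2))"
proof (induction t)
  case 0
  then show ?case by simp
next
  case (Suc t)
  then show ?case
    using rec_abc_eq_sum[of y s "Suc t" "yh (s (Suc t))" m yh, symmetric]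
    by (simp only: rec_L.simps sum.cl_ivl_Suc) simp
qed

lemma sorted_hinge_row_eq_prefix:
  fixes n p :: nat and yh y :: "nat \<Rightarrow> real" and m :: real and s :: "nat \<Rightarrow> nat"
  assumes sorted: "\<forall>i\<in>{1..n}. \<forall>j\<in>{1..n}. i \<le> j \<longrightarrow>
        yh (s i) + m * ind (y (s i) = -1) \<le> yh (s j) + m * ind (y (s j) = -1)"
    and p: "p \<in> {1..n}" "y (s p) = -1"
  shows "(\<Sum>q\<in>{1..n}. ind (y (s q) = 1) * sq_hinge m (yh (s q) - yh (s p)))
       = (\<Sum>q\<in>{1..p}. ind (y (s q) = 1) * (m - yh (s q) + yh (s p))^2)"
proof (rule sum_atLeastAtMost_eq_prefix)
  fix q assume q: "q \<in> {1..p}"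
  show "ind (y (s q) = 1) * sq_hinge m (yh (s q) - yh (s p))
      = ind (y (s q) = 1) * (m - yh (s q) + yh (s p))^2"
  proof (cases "y (s q) = 1")
    case True
    have "yh (s q) \<le> yh (s p) + m"
      using sorted[rule_format, of q p] q p True by (auto simp: ind_def)
    then show ?thesis
      by (simp add: sq_hinge_eq_square)
  qed (simp add: ind_def)
next
  fix q assume q: "q \<in> {p<..n}"
  show "ind (y (s q) = 1) * sq_hinge m (yh (s q) - yh (s p)) = 0"
  proof (cases "y (s q) = 1")
    case True
    have "yh (s p) + m \<le> yh (s q)"
      using sorted[rule_format, of p q] q p True by (auto simp: ind_def)
    then show ?thesis
      by (simp add: sq_hinge_eq_0)
  qed (simp add: ind_def)
qed (use p in simp)

theorem theorem2:
  fixes n :: nat and yh y :: "nat \<Rightarrow> real" and m :: real and s :: "nat \<Rightarrow> nat"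
  assumes labels: "\<forall>i\<in>{1..n}. y i = 1 \<or> y i = -1"
    and m_nonneg: "m \<ge> 0"
    and perm: "bij_betw s {1..n} {1..n}"
    and sorted: "\<forall>i\<in>{1..n}. \<forall>j\<in>{1..n}. i \<le> j \<longrightarrow>
        yh (s i) + m * ind (y (s i) = -1) \<le> yh (s j) + m * ind (y (s j) = -1)"
  shows "(\<Sum>k\<in>{i\<in>{1..n}. y i = -1}. \<Sum>j\<in>{i\<in>{1..n}. y i = 1}. sq_hinge m (yh j - yh k))
         = rec_L m yh y s n"
proof -
  define row where "row k = (\<Sum>j\<in>{1..n}. ind (y j = 1) * sq_hinge m (yh j - yh k))" for k
  have reindex: "(\<Sum>q\<in>{1..n}. g (s q)) = (\<Sum>j\<in>{1..n}. g j)" for g :: "nat \<Rightarrow> real"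
    using sum.reindex_bij_betw[OF perm] .
  have row_reindexed:
    "row k = (\<Sum>q\<in>{1..n}. ind (y (s q) = 1) * sq_hinge m (yh (s q) - yh k))" for k
    unfolding row_def by (rule reindex[symmetric])
  have "rec_L m yh y s n = (\<Sum>p\<in>{1..n}. ind (y (s p) = -1) * row (s p))"
    unfolding rec_L_eq_sum row_reindexed
  proof (rule sum.cong)
    fix p assume p: "p \<in> {1..n}"
    show "ind (y (s p) = -1) * (\<Sum>q\<in>{1..p}. ind (y (s q) = 1) * (m - yh (s q) + yh (s p))^2)
      = ind (y (s p) = -1) * (\<Sum>q\<in>{1..n}. ind (y (s q) = 1) * sq_hinge m (yh (s q) - yh (s p)))"
      using sorted_hinge_row_eq_prefix[where s = s and y = y, OF sorted p]
      by (cases "y (s p) = -1") (simp_all add: ind_def)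
  qed simp
  also have "\<dots> = (\<Sum>k\<in>{1..n}. ind (y k = -1) * row k)"
    by (rule reindex)
  also have "\<dots> = (\<Sum>k\<in>{i\<in>{1..n}. y i = -1}. \<Sum>j\<in>{i\<in>{1..n}. y i = 1}. sq_hinge m (yh j - yh k))"
    unfolding row_def sum.inter_filter[OF finite_atLeastAtMost]
    by (rule sum.cong) (auto simp: ind_def intro!: sum.cong)
  finally show ?thesis ..
qed

end
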